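(* Let $(X,d)$ be a complete metric space and $\{f_{\eta_k}:\eta_k\in B^{[k]},k\in\mathbb{N}\}$ a binary tree of continuous maps $X\to X$ sharing a common nonempty compact invariant set $C\subseteq X$ (i.e. $f_{\eta_k}(C)\subseteq C$ for all $\eta_k$), each $f_{\eta_k}$ Lipschitz with constant $s_{\eta_k}$. Assume there is a sequence $(\delta_k)$ with $\sum_{k=1}^\infty\delta_k<\infty$ such that $$\prod_{i=1}^k s_{\tau_i\eta}\le\delta_k\quad\text{for all }\eta\in B^{[\infty]},\ k\in\mathbb{N}.$$ Then for every $x\in C$, $$U_{TM}=\lim_{k\to\infty}\bigcup_{\eta\in B^{[\infty]}}f_{\tau_1\eta}\circ\cdots\circ f_{\tau_{k-1}\eta}\circ f_{\tau_k\eta}(x),$$ where the limit is taken in the Hausdorff metric $h$ on the nonempty compact subsets of $X$, and $U_{TM}=\bigcup_{\eta\in B^{[\infty]}}\gamma(\eta)$ with $\gamma(\eta)=\lim_{k\to\infty}f_{\tau_1\eta}\circ\cdots\circ f_{\tau_k\eta}(x)$.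
   Context: $B^{[k]}=\{1,2\}^k$, $B^{[\infty]}=\{1,2\}^{\mathbb{N}}$, and $\tau_\ell\eta$ denotes the first $\ell$ symbols of $\eta$. A binary tree of maps assigns to each finite code $\eta_k$ a continuous map $f_{\eta_k}:X\to X$. $h$ denotes the Hausdorff metric on the space $\mathbb{H}(X)$ of nonempty compact subsets of $X$. *)

theory Defs
  imports "HOL-Analysis.Analysis"
begin

definition fin_codes :: "nat \<Rightarrow> nat list set" where
  "fin_codes k = {w. length w = k \<and> set w \<subseteq> {1,2}}"

definition inf_codes :: "(nat \<Rightarrow> nat) set" where
  "inf_codes = {\<eta>. \<forall>n. \<eta> n \<in> {1,2}}"

definition tau :: "nat \<Rightarrow> (nat \<Rightarrow> nat) \<Rightarrow> nat list" where
  "tau l \<eta> = map \<eta> [0..<l]"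

text \<open>Forward composition  f_{tau 1 eta} o ... o f_{tau k eta}.\<close>
fun tree_comp :: "(nat list \<Rightarrow> 'a \<Rightarrow> 'a) \<Rightarrow> (nat \<Rightarrow> nat) \<Rightarrow> nat \<Rightarrow> 'a \<Rightarrow> 'a" where
  "tree_comp f \<eta> 0 = id"
| "tree_comp f \<eta> (Suc k) = tree_comp f \<eta> k \<circ> f (tau (Suc k) \<eta>)"

definition hausdorff_dist :: "'a::metric_space set \<Rightarrow> 'a set \<Rightarrow> real" where
  "hausdorff_dist A B = max (SUP a\<in>A. infdist a B) (SUP b\<in>B. infdist b A)"

end

theory Submission imports Defs begin

text \<open>Write \<open>F\<^sub>k \<eta>\<close> for the \<open>k\<close>-th orbit point \<open>f\<^sub>\<tau>\<^sub>1\<^sub>\<eta> \<circ> \<dots> \<circ> f\<^sub>\<tau>\<^sub>k\<^sub>\<eta> x\<close>. Since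
  \<open>F\<^sub>k\<^sub>+\<^sub>1 \<eta>\<close> is the image of the point \<open>f\<^sub>\<tau>\<^sub>k\<^sub>+\<^sub>1\<^sub>\<eta> x \<in> C\<close> under the same composition that
  sends \<open>x\<close> to \<open>F\<^sub>k \<eta>\<close>, consecutive orbit points are at most \<open>\<delta>\<^sub>k \<cdot> diam C\<close> apart. Summability
  of \<open>\<delta>\<close> therefore makes \<open>F\<^sub>k \<rightarrow> \<gamma>\<close> uniformly on the code space. Each \<open>F\<^sub>k\<close> depends on only
  finitely many coordinates of \<open>\<eta>\<close>, so it is continuous for the product topology; hence \<open>\<gamma>\<close>
  is continuous, \<open>U\<^sub>T\<^sub>M\<close> is the continuous image of the compact code space, and uniform
  convergence of the maps gives Hausdorff convergence of their images.\<close>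

lemma dist_le_sum_of_step_bounds:
  fixes a :: "nat \<Rightarrow> 'a::metric_space"
  assumes step: "\<And>n. dist (a (Suc n)) (a n) \<le> b n" and "n \<le> m"
  shows "dist (a m) (a n) \<le> (\<Sum>k\<in>{n..<m}. b k)"
  using \<open>n \<le> m\<close>
proof (induction m rule: dec_induct)
  case (step m)
  have "dist (a (Suc m)) (a n) \<le> dist (a (Suc m)) (a m) + dist (a m) (a n)"
    by (rule dist_triangle)
  also have "\<dots> \<le> b m + (\<Sum>k\<in>{n..<m}. b k)"
    using assms(1) step.IH by (rule add_mono)
  finally show ?case
    using step.hyps by (simp add: add.commute)
qed simp

lemma tendsto_suminf_tail:
  fixes b :: "nat \<Rightarrow> real"
  assumes "summable b"
  shows "(\<lambda>n. \<Sum>k. b (k + n)) \<longlonglongrightarrow> 0"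
proof -
  have "(\<lambda>n. suminf b - (\<Sum>k<n. b k)) \<longlonglongrightarrow> suminf b - suminf b"
    by (intro tendsto_diff tendsto_const summable_LIMSEQ assms)
  then show ?thesis
    by (simp add: suminf_minus_initial_segment[OF assms])
qed

lemma sum_le_suminf_tail:
  fixes b :: "nat \<Rightarrow> real"
  assumes "summable b" and "\<And>k. 0 \<le> b k" and "n \<le> m"
  shows "(\<Sum>k\<in>{n..<m}. b k) \<le> (\<Sum>k. b (k + n))"
proof -
  have "(\<Sum>k\<in>{n..<m}. b k) = (\<Sum>k\<in>{0 + n..<(m - n) + n}. b k)"
    using \<open>n \<le> m\<close> by simp
  also have "\<dots> = (\<Sum>k<m - n. b (k + n))"
    by (simp only: sum.shift_bounds_nat_ivl atLeast0LessThan)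
  also have "\<dots> \<le> (\<Sum>k. b (k + n))"
    by (rule sum_le_suminf[OF summable_ignore_initial_segment[OF \<open>summable b\<close>]])
      (simp_all add: assms(2))
  finally show ?thesis .
qed

lemma dist_le_suminf_tail_of_step_bounds:
  fixes a :: "nat \<Rightarrow> 'a::metric_space"
  assumes step: "\<And>n. dist (a (Suc n)) (a n) \<le> b n" and "summable b" and "n \<le> m"
  shows "dist (a m) (a n) \<le> (\<Sum>k. b (k + n))"
proof -
  have "\<And>k. 0 \<le> b k"
    using step zero_le_dist order_trans by blast
  then show ?thesis
    using dist_le_sum_of_step_bounds[of a b, OF step \<open>n \<le> m\<close>] sum_le_suminf_tail[OF \<open>summable b\<close>]
      \<open>n \<le> m\<close> by fastforce
qed

lemma convergent_if_summable_step_bounds: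
  fixes a :: "nat \<Rightarrow> 'a::complete_space"
  assumes step: "\<And>n. dist (a (Suc n)) (a n) \<le> b n" and "summable b"
  shows "convergent a"
proof -
  have "Cauchy a"
  proof (rule metric_CauchyI)
    fix e :: real assume "e > 0"
    then obtain M where M: "\<And>n. n \<ge> M \<Longrightarrow> (\<Sum>k. b (k + n)) < e"
      using order_tendstoD(2)[OF tendsto_suminf_tail[OF \<open>summable b\<close>]]
      by (auto simp: eventually_sequentially)
    have "dist (a m) (a n) < e" if "m \<ge> M" "n \<ge> M" for m n
      using dist_le_suminf_tail_of_step_bounds[OF step \<open>summable b\<close>, of n m]
        dist_le_suminf_tail_of_step_bounds[OF step \<open>summable b\<close>, of m n] M that
      by (cases "n \<le> m") (force simp: dist_commute)+
    then show "\<exists>M. \<forall>m\<ge>M. \<forall>n\<ge>M. dist (a m) (a n) < e"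
      by blast
  qed
  then show ?thesis
    by (rule Cauchy_convergent)
qed

lemma dist_lim_le_suminf_tail:
  fixes a :: "nat \<Rightarrow> 'a::complete_space"
  assumes step: "\<And>n. dist (a (Suc n)) (a n) \<le> b n" and "summable b"
  shows "dist (a n) (lim a) \<le> (\<Sum>k. b (k + n))"
proof (rule LIMSEQ_le_const2)
  show "(\<lambda>m. dist (a n) (a m)) \<longlonglongrightarrow> dist (a n) (lim a)"
    using convergent_if_summable_step_bounds[OF assms]
    by (intro tendsto_intros) (simp add: convergent_LIMSEQ_iff)
  show "\<exists>N. \<forall>m\<ge>N. dist (a n) (a m) \<le> (\<Sum>k. b (k + n))"
    using dist_le_suminf_tail_of_step_bounds[OF assms] by (metis dist_commute)
qed

lemma uniform_limit_if_summable_step_bounds: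
  fixes F :: "nat \<Rightarrow> 'b \<Rightarrow> 'a::complete_space"
  assumes step: "\<And>n t. t \<in> T \<Longrightarrow> dist (F (Suc n) t) (F n t) \<le> b n" and "summable b"
  shows "uniform_limit T F (\<lambda>t. lim (\<lambda>n. F n t)) sequentially"
proof (rule uniform_limitI)
  fix e :: real assume "e > 0"
  have tail: "dist (F n t) (lim (\<lambda>n. F n t)) \<le> (\<Sum>k. b (k + n))" if "t \<in> T" for n t
    using step[OF that] \<open>summable b\<close> by (rule dist_lim_le_suminf_tail)
  from tendsto_suminf_tail[OF \<open>summable b\<close>] \<open>e > 0\<close>
  have "\<forall>\<^sub>F n in sequentially. (\<Sum>k. b (k + n)) < e"
    by (rule order_tendstoD(2))
  then show "\<forall>\<^sub>F n in sequentially. \<forall>t\<in>T. dist (F n t) (lim (\<lambda>n. F n t)) < e"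
    by eventually_elim (blast intro: order_le_less_trans tail)
qed

lemma abs_hausdorff_dist_image_le:
  assumes "T \<noteq> {}" and close: "\<And>t. t \<in> T \<Longrightarrow> dist (g t) (h t) \<le> e"
  shows "\<bar>hausdorff_dist (g ` T) (h ` T)\<bar> \<le> e"
proof -
  have gh: "infdist (g t) (h ` T) \<le> e" and hg: "infdist (h t) (g ` T) \<le> e" if "t \<in> T" for t
    using infdist_le[of "h t" "h ` T" "g t"] infdist_le[of "g t" "g ` T" "h t"] close[OF that] that
    by (auto simp: dist_commute)
  have "(SUP a\<in>g ` T. infdist a (h ` T)) \<le> e" "(SUP b\<in>h ` T. infdist b (g ` T)) \<le> e"
    using \<open>T \<noteq> {}\<close> gh hg by (auto intro!: cSUP_least)
  moreover obtain t where "t \<in> T"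
    using \<open>T \<noteq> {}\<close> by blast
  then have "0 \<le> (SUP a\<in>g ` T. infdist a (h ` T))"
    using gh infdist_nonneg
    by (intro order_trans[OF _ cSUP_upper[of "g t"]]) (auto intro!: bdd_aboveI2)
  ultimately show ?thesis
    unfolding hausdorff_dist_def by auto
qed

lemma tendsto_hausdorff_dist_image_if_uniform_limit:
  assumes "uniform_limit T F g sequentially" and "T \<noteq> {}"
  shows "(\<lambda>n. hausdorff_dist (F n ` T) (g ` T)) \<longlonglongrightarrow> 0"
proof (rule tendstoI)
  fix e :: real assume "e > 0"
  then have "\<forall>\<^sub>F n in sequentially. \<forall>t\<in>T. dist (F n t) (g t) < e / 2"
    by (intro uniform_limitD[OF assms(1)]) simp
  then show "\<forall>\<^sub>F n in sequentially. dist (hausdorff_dist (F n ` T) (g ` T)) 0 < e"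
  proof eventually_elim
    case (elim n)
    then have "\<bar>hausdorff_dist (F n ` T) (g ` T)\<bar> \<le> e / 2"
      by (intro abs_hausdorff_dist_image_le \<open>T \<noteq> {}\<close>) (simp add: less_imp_le)
    with \<open>e > 0\<close> show ?case
      by simp
  qed
qed

lemma continuous_on_if_depends_on_initial_segment:
  fixes g :: "(nat \<Rightarrow> 'b::discrete_topology) \<Rightarrow> 'c::topological_space"
  assumes depends: "\<And>\<eta> \<eta>'. \<forall>i<n. \<eta>' i = \<eta> i \<Longrightarrow> g \<eta>' = g \<eta>"
  shows "continuous_on S g"
  unfolding continuous_on_def
proof
  fix \<eta> assume "\<eta> \<in> S"
  let ?N = "{\<eta>'. \<forall>i\<in>{..<n}. \<eta>' (id i) \<in> {\<eta> i}}"
  have "open ?N"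
    by (rule product_topology_basis') (simp_all add: open_discrete)
  moreover have "\<eta> \<in> ?N" and "\<And>\<eta>'. \<eta>' \<in> ?N \<Longrightarrow> g \<eta>' = g \<eta>"
    using depends by auto
  ultimately have "\<forall>\<^sub>F \<eta>' in at \<eta> within S. g \<eta>' = g \<eta>"
    unfolding eventually_at_topological by blast
  then show "(g \<longlongrightarrow> g \<eta>) (at \<eta> within S)"
    by (rule tendsto_eventually)
qed

lemma compact_inf_codes: "compact inf_codes"
proof -
  have "compactin (product_topology (\<lambda>i. euclidean) UNIV) (PiE UNIV (\<lambda>_::nat. {1::nat,2}))"
    by (subst compactin_PiE) (auto intro: finite_imp_compact)
  moreover have "PiE UNIV (\<lambda>_::nat. {1::nat,2}) = inf_codes"
    by (auto simp: inf_codes_def PiE_def extensional_def)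
  ultimately show ?thesis
    by (simp add: euclidean_product_topology)
qed

lemma tau_in_fin_codes: "\<eta> \<in> inf_codes \<Longrightarrow> tau k \<eta> \<in> fin_codes k"
  by (auto simp: tau_def fin_codes_def inf_codes_def)

lemma tree_comp_cong:
  "\<forall>i<k. \<eta>' i = \<eta> i \<Longrightarrow> tree_comp f \<eta>' k = tree_comp f \<eta> k"
proof (induction k)
  case (Suc k)
  then have "tau (Suc k) \<eta>' = tau (Suc k) \<eta>"
    by (simp add: tau_def)
  with Suc show ?case
    by simp
qed simp

lemma tree_comp_maps_invariant_set:
  assumes "\<And>k. k \<ge> 1 \<Longrightarrow> f (tau k \<eta>) ` C \<subseteq> C" and "y \<in> C"
  shows "tree_comp f \<eta> k y \<in> C"
  using \<open>y \<in> C\<close>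
proof (induction k arbitrary: y)
  case (Suc k)
  then show ?case
    using assms(1)[of "Suc k"] by auto
qed simp

lemma lipschitz_on_tree_comp:
  assumes lip: "\<And>k. k \<ge> 1 \<Longrightarrow> (s (tau k \<eta>))-lipschitz_on UNIV (f (tau k \<eta>))"
  shows "(\<Prod>i\<in>{1..k}. s (tau i \<eta>))-lipschitz_on UNIV (tree_comp f \<eta> k)"
proof (induction k)
  case 0
  then show ?case
    using lipschitz_on_id[of UNIV] by (simp add: id_def)
next
  case (Suc k)
  then have "(\<Prod>i\<in>{1..k}. s (tau i \<eta>))-lipschitz_on (range (f (tau (Suc k) \<eta>))) (tree_comp f \<eta> k)"
    using lipschitz_on_subset by blast
  then have "((\<Prod>i\<in>{1..k}. s (tau i \<eta>)) * s (tau (Suc k) \<eta>))-lipschitz_on UNIV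
      (tree_comp f \<eta> k \<circ> f (tau (Suc k) \<eta>))"
    by (intro lipschitz_on_compose lip) auto
  then show ?case
    by (simp add: prod.nat_ivl_Suc')
qed

lemma dist_tree_comp_Suc_le:
  assumes lip: "\<And>k. k \<ge> 1 \<Longrightarrow> (s (tau k \<eta>))-lipschitz_on UNIV (f (tau k \<eta>))"
    and inv: "\<And>k. k \<ge> 1 \<Longrightarrow> f (tau k \<eta>) ` C \<subseteq> C"
    and "bounded C" and "x \<in> C"
  shows "dist (tree_comp f \<eta> (Suc k) x) (tree_comp f \<eta> k x)
    \<le> (\<Prod>i\<in>{1..k}. s (tau i \<eta>)) * diameter C"
proof -
  let ?y = "f (tau (Suc k) \<eta>) x"
  have L: "(\<Prod>i\<in>{1..k}. s (tau i \<eta>))-lipschitz_on UNIV (tree_comp f \<eta> k)"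
    using lip by (rule lipschitz_on_tree_comp)
  have "?y \<in> C"
    using inv[of "Suc k"] \<open>x \<in> C\<close> by auto
  have "dist (tree_comp f \<eta> (Suc k) x) (tree_comp f \<eta> k x)
      = dist (tree_comp f \<eta> k ?y) (tree_comp f \<eta> k x)"
    by simp
  also have "\<dots> \<le> (\<Prod>i\<in>{1..k}. s (tau i \<eta>)) * dist ?y x"
    by (rule lipschitz_onD[OF L]) auto
  also have "\<dots> \<le> (\<Prod>i\<in>{1..k}. s (tau i \<eta>)) * diameter C"
    using diameter_bounded_bound[OF \<open>bounded C\<close> \<open>?y \<in> C\<close> \<open>x \<in> C\<close>]
      lipschitz_on_nonneg[OF L]
    by (intro mult_left_mono)
  finally show ?thesis .
qed

theorem mainTheorem3:
  fixes f :: "nat list \<Rightarrow> 'a::complete_space \<Rightarrow> 'a"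
    and s :: "nat list \<Rightarrow> real"
    and C :: "'a set"
    and \<delta> :: "nat \<Rightarrow> real"
    and x :: 'a
  assumes cont: "\<And>k w. k \<ge> 1 \<Longrightarrow> w \<in> fin_codes k \<Longrightarrow> continuous_on UNIV (f w)"
    and C_compact: "compact C" and C_ne: "C \<noteq> {}"
    and C_inv: "\<And>k w. k \<ge> 1 \<Longrightarrow> w \<in> fin_codes k \<Longrightarrow> f w ` C \<subseteq> C"
    and lip: "\<And>k w. k \<ge> 1 \<Longrightarrow> w \<in> fin_codes k \<Longrightarrow> (s w)-lipschitz_on UNIV (f w)"
    and summ: "summable (\<lambda>k. \<delta> (Suc k))"
    and prod_bound: "\<And>\<eta> k. \<eta> \<in> inf_codes \<Longrightarrow> k \<ge> 1 \<Longrightarrow>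
        (\<Prod>i\<in>{1..k}. s (tau i \<eta>)) \<le> \<delta> k"
    and xC: "x \<in> C"
  shows "(\<forall>\<eta>\<in>inf_codes. convergent (\<lambda>k. tree_comp f \<eta> k x))
    \<and> compact (\<Union>\<eta>\<in>inf_codes. {lim (\<lambda>k. tree_comp f \<eta> k x)})
    \<and> (\<Union>\<eta>\<in>inf_codes. {lim (\<lambda>k. tree_comp f \<eta> k x)}) \<noteq> {}
    \<and> ((\<lambda>k. hausdorff_dist (\<Union>\<eta>\<in>inf_codes. {tree_comp f \<eta> k x})
                             (\<Union>\<eta>\<in>inf_codes. {lim (\<lambda>k. tree_comp f \<eta> k x)}))
        \<longlonglongrightarrow> 0)"
\<comment> \<open>\<open>cont\<close> is implied by \<open>lip\<close>, and \<open>C_ne\<close> by \<open>xC\<close>.\<close>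
proof -
  define F where "F k \<eta> = tree_comp f \<eta> k x" for k \<eta>
  define \<gamma> where "\<gamma> \<eta> = lim (\<lambda>k. F k \<eta>)" for \<eta>
  define b where "b k = (if k = 0 then 1 else \<delta> k) * diameter C" for k
  have "summable (\<lambda>k. b (Suc k))"
    using summable_mult2[OF summ] by (simp add: b_def)
  then have "summable b"
    by (simp only: summable_Suc_iff)
  have step: "dist (F (Suc k) \<eta>) (F k \<eta>) \<le> b k" if "\<eta> \<in> inf_codes" for k \<eta>
  proof -
    have "dist (F (Suc k) \<eta>) (F k \<eta>) \<le> (\<Prod>i\<in>{1..k}. s (tau i \<eta>)) * diameter C"
      unfolding F_def using lip C_inv tau_in_fin_codes[OF that] compact_imp_bounded[OF C_compact] xC
      by (intro dist_tree_comp_Suc_le) auto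
    also have "\<dots> \<le> b k"
      unfolding b_def using prod_bound[OF that] diameter_ge_0[OF compact_imp_bounded[OF C_compact]]
      by (intro mult_right_mono) auto
    finally show ?thesis .
  qed
  have uniform: "uniform_limit inf_codes F \<gamma> sequentially"
    unfolding \<gamma>_def using step \<open>summable b\<close> by (rule uniform_limit_if_summable_step_bounds)
  have "continuous_on inf_codes (F n)" for n
    unfolding F_def by (rule continuous_on_if_depends_on_initial_segment[of n]) (metis tree_comp_cong)
  then have "continuous_on inf_codes \<gamma>"
    by (intro uniform_limit_theorem[OF _ uniform]) auto
  then have "compact (\<gamma> ` inf_codes)"
    using compact_inf_codes by (rule compact_continuous_image)
  moreover have "inf_codes \<noteq> {}"
    by (auto simp: inf_codes_def)
  moreover have "convergent (\<lambda>k. F k \<eta>)" if "\<eta> \<in> inf_codes" for \<eta>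
    using step[OF that] \<open>summable b\<close> by (rule convergent_if_summable_step_bounds)
  ultimately show ?thesis
    using tendsto_hausdorff_dist_image_if_uniform_limit[OF uniform]
    unfolding F_def \<gamma>_def by (auto simp: UNION_singleton_eq_range)
qed

end
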